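(* Let $\alpha\neq\beta$, let $(g_n)$ be as in the context, and set $w=\dfrac{\beta-x}{\beta-\alpha}$. Then for every $n\ge1$, $$g_n(x)=\frac1n\,[z^{n-1}]\;\frac{1}{(1-z)^2}\left(\frac{(\alpha-\beta)zw+\beta}{1-zw}\right)^{n},$$ where $[z^{m}]F(z)$ denotes the coefficient of $z^m$ in the power series expansion of $F$ in $z$.
   Context: Fix complex numbers $\alpha\neq\beta$. Define polynomials $g_n(x)\in\mathbb{C}[x]$ recursively by $g_0(x)=1$ and, for $n\ge1$, $$(x-\alpha)(\alpha-\beta)^{n-1}g_n(x)=\alpha(x-\beta)^n g_{n-1}(\alpha)-x(\alpha-\beta)^n g_{n-1}(x).$$ (The right-hand side vanishes at $x=\alpha$, so it is divisible by $x-\alpha$ and $g_n$ is a uniquely determined polynomial.) *)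

theory Defs
  imports "HOL-Computational_Algebra.Computational_Algebra"
begin

text \<open>The polynomials g_n, defined by g_0 = 1 and
  (x - a)(a - b)^(n-1) g_n(x) = a (x - b)^n g_(n-1)(a) - x (a - b)^n g_(n-1)(x).
  The right-hand side is divisible by (x - a), so g_n is obtained by exact
  polynomial division.\<close>
fun gpoly :: "complex \<Rightarrow> complex \<Rightarrow> nat \<Rightarrow> complex poly" where
  "gpoly a b 0 = 1"
| "gpoly a b (Suc n) =
     (smult (a * poly (gpoly a b n) a) ([:-b, 1:] ^ Suc n)
      - smult ((a - b) ^ Suc n) (pCons 0 (gpoly a b n)))
     div smult ((a - b) ^ n) [:-a, 1:]"

end

theory Submission
  imports Defs
begin

text \<open>Put \<open>q(z) = b + a z / (1 - z)\<close>; the series raised to the \<open>n\<close>-th power in the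
  theorem is \<open>q(wz)\<close>. Extracting the coefficient of \<open>z^(n-1)\<close> from \<open>q(wz)^n / (1 - z)^2\<close>
  and dividing by \<open>n\<close> gives \<open>R_n(w) = \<Sum>_{j<n} (1 - j/n) [z^j] q^n w^j\<close>. The series
  \<open>\<Sum>_j (1 - j/n) [z^j] q^n z^j = q^(n-1) (q - z q')\<close> is multiplied by \<open>q\<close> when \<open>n\<close>
  increases, and since \<open>(1 - z) q = b + (a - b) z\<close> this yields the recurrence
  \<open>(w - 1) R_(n+1)(w) + (b + (a - b) w) R_n(w) = a w^(n+1) R_n(1)\<close>. Substituting
  \<open>x = b + (a - b) w\<close>, this is the defining recurrence of \<open>g_(n+1)\<close> divided by \<open>(a - b)^(n+1)\<close>,
  and \<open>R_1 = g_1 = b\<close>.\<close>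

text \<open>\<open>head_tail_fps b a = b + a z / (1 - z)\<close>.\<close>
definition head_tail_fps :: "'a::zero \<Rightarrow> 'a \<Rightarrow> 'a fps" where
  "head_tail_fps b a = Abs_fps (\<lambda>j. if j = 0 then b else a)"

lemma head_tail_fps_mult_nth:
  fixes a b :: "'a::comm_ring_1"
  shows "(head_tail_fps b a * f) $ j = b * f $ j + a * (\<Sum>i<j. f $ i)"
proof -
  have "(head_tail_fps b a * f) $ j = (\<Sum>i\<le>j. f $ i * head_tail_fps b a $ (j - i))"
    by (simp add: fps_mult_nth atLeast0AtMost mult.commute[of "head_tail_fps b a"])
  also have "\<dots> = (\<Sum>i<j. f $ i * a) + f $ j * b"
    by (simp add: lessThan_Suc_atMost[symmetric] head_tail_fps_def)
  finally show ?thesis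
    by (simp add: sum_distrib_left mult.commute)
qed

lemma head_tail_fps_compose_linear:
  fixes a b w :: "'a::field"
  shows "head_tail_fps b a oo (fps_const w * fps_X)
    = (fps_const ((a - b) * w) * fps_X + fps_const b) * inverse (1 - fps_const w * fps_X)"
proof -
  let ?h = "1 - fps_const w * fps_X :: 'a fps"
  have "(head_tail_fps b a oo (fps_const w * fps_X)) * ?h = fps_const ((a - b) * w) * fps_X + fps_const b"
  proof (rule fps_ext)
    fix j
    define c where "c = head_tail_fps b a oo (fps_const w * fps_X)"
    have c_nth: "c $ k = (if k = 0 then b else w ^ k * a)" for k
      by (simp add: c_def head_tail_fps_def)
    have "c * ?h = c - fps_const w * (fps_X * c)"
      by (simp add: right_diff_distrib mult.commute mult.left_commute)
    then have "(c * ?h) $ j = c $ j - w * (if j = 0 then 0 else c $ (j - 1))"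
      by (simp only: fps_sub_nth fps_mult_left_const_nth fps_X_mult_nth)
    also have "\<dots> = (fps_const ((a - b) * w) * fps_X + fps_const b) $ j"
      unfolding c_nth by (cases j; cases "j - 1") (simp_all add: algebra_simps)
    finally show "((head_tail_fps b a oo (fps_const w * fps_X)) * ?h) $ j
      = (fps_const ((a - b) * w) * fps_X + fps_const b) $ j"
      by (simp only: c_def)
  qed
  then have "(head_tail_fps b a oo (fps_const w * fps_X)) * (?h * inverse ?h)
    = (fps_const ((a - b) * w) * fps_X + fps_const b) * inverse ?h"
    by (simp only: mult.assoc[symmetric])
  moreover have "?h * inverse ?h = 1"
    by (rule inverse_mult_eq_1') simp
  ultimately show ?thesis
    by simp
qed

lemma truncated_eval_head_tail_fps_mult:
  fixes a b w :: "'a::comm_ring_1"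
  shows "(w - 1) * (\<Sum>j\<le>n. (head_tail_fps b a * f) $ j * w ^ j)
      + (b + (a - b) * w) * (\<Sum>j\<le>n. f $ j * w ^ j)
    = a * w ^ Suc n * (\<Sum>j\<le>n. f $ j)"
proof (induction n)
  case 0
  then show ?case
    by (simp add: head_tail_fps_def algebra_simps)
next
  case (Suc n)
  have t: "(head_tail_fps b a * f) $ Suc n = b * f $ Suc n + a * (\<Sum>j\<le>n. f $ j)"
    by (simp add: head_tail_fps_mult_nth lessThan_Suc_atMost)
  have "(w - 1) * (\<Sum>j\<le>Suc n. (head_tail_fps b a * f) $ j * w ^ j)
      + (b + (a - b) * w) * (\<Sum>j\<le>Suc n. f $ j * w ^ j)
    = ((w - 1) * (\<Sum>j\<le>n. (head_tail_fps b a * f) $ j * w ^ j)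
      + (b + (a - b) * w) * (\<Sum>j\<le>n. f $ j * w ^ j))
      + w ^ Suc n * ((w - 1) * (head_tail_fps b a * f) $ Suc n + (b + (a - b) * w) * f $ Suc n)"
    by (simp add: algebra_simps)
  also have "\<dots> = a * w ^ Suc (Suc n) * (\<Sum>j\<le>Suc n. f $ j)"
    unfolding Suc.IH t by (simp add: algebra_simps)
  finally show ?case .
qed

lemma fps_nth_inverse_one_minus_X_squared_mult:
  fixes f :: "'a::field fps"
  shows "(inverse ((1 - fps_X) ^ 2) * f) $ m = (\<Sum>j\<le>m. of_nat (Suc m - j) * f $ j)"
proof -
  have "inverse (1 - fps_X :: 'a fps) = Abs_fps (\<lambda>_. 1)"
    by (metis fps_inverse_gp' fps_inverse_idempotent fps_nth_Abs_fps one_neq_zero)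
  then have "inverse ((1 - fps_X) ^ 2 :: 'a fps) $ k = of_nat (Suc k)" for k
    unfolding fps_inverse_power by (simp add: power2_eq_square fps_mult_nth)
  then show ?thesis
    by (simp add: fps_mult_nth atLeast0AtMost Suc_diff_le mult.commute)
qed

definition damped_power :: "'a::comm_ring_1 fps \<Rightarrow> nat \<Rightarrow> 'a fps" where
  "damped_power q n = q ^ (n - 1) * (q - fps_X * fps_deriv q)"

lemma damped_power_Suc:
  "n \<ge> 1 \<Longrightarrow> damped_power q (Suc n) = q * damped_power q n"
  by (cases n) (simp_all add: damped_power_def mult.assoc)

lemma of_nat_mult_damped_power_nth:
  assumes "n \<ge> 1"
  shows "of_nat n * damped_power q n $ j = (of_nat n - of_nat j) * (q ^ n) $ j"
proof -
  obtain m where n: "n = Suc m"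
    using assms by (cases n) auto
  have "of_nat n * damped_power q n = of_nat n * q ^ n - fps_X * fps_deriv (q ^ n)"
    unfolding n damped_power_def fps_deriv_power' by (simp add: algebra_simps)
  then have "fps_const (of_nat n) * damped_power q n
      = fps_const (of_nat n) * q ^ n - fps_X * fps_deriv (q ^ n)"
    by (simp only: fps_of_nat)
  then have "(fps_const (of_nat n) * damped_power q n) $ j
      = (fps_const (of_nat n) * q ^ n - fps_X * fps_deriv (q ^ n)) $ j"
    by (rule arg_cong)
  then show ?thesis
    by (cases j) (simp_all add: left_diff_distrib)
qed

lemma damped_power_nth_self:
  fixes q :: "'a::{idom,ring_char_0} fps"
  assumes "n \<ge> 1"
  shows "damped_power q n $ n = 0"
  using of_nat_mult_damped_power_nth[OF assms, of q n] assms by simp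

lemma sum_damped_power_eq_fps_nth:
  fixes q :: "'a::field_char_0 fps"
  assumes "n \<ge> 1"
  shows "(\<Sum>j<n. damped_power q n $ j * w ^ j)
    = 1 / of_nat n * (inverse ((1 - fps_X) ^ 2) * (q ^ n oo (fps_const w * fps_X))) $ (n - 1)"
proof -
  have "of_nat (n - j) * (w ^ j * (q ^ n) $ j) = of_nat n * (damped_power q n $ j * w ^ j)"
    if "j < n" for j
  proof -
    have "of_nat (n - j) * (w ^ j * (q ^ n) $ j) = ((of_nat n - of_nat j) * (q ^ n) $ j) * w ^ j"
      using that by (simp add: of_nat_diff mult_ac)
    also have "\<dots> = of_nat n * (damped_power q n $ j * w ^ j)"
      by (simp only: of_nat_mult_damped_power_nth[OF assms, symmetric] mult.assoc)
    finally show ?thesis .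
  qed
  then have "(\<Sum>j<n. of_nat (n - j) * (w ^ j * (q ^ n) $ j))
      = of_nat n * (\<Sum>j<n. damped_power q n $ j * w ^ j)"
    unfolding sum_distrib_left by (intro sum.cong) simp_all
  moreover have "(inverse ((1 - fps_X) ^ 2) * (q ^ n oo (fps_const w * fps_X))) $ (n - 1)
      = (\<Sum>j<n. of_nat (n - j) * (w ^ j * (q ^ n) $ j))"
    using assms by (simp add: fps_nth_inverse_one_minus_X_squared_mult lessThan_Suc_atMost[symmetric])
  ultimately show ?thesis
    using assms by simp
qed

definition gpoly_in_w :: "'a::comm_ring_1 \<Rightarrow> 'a \<Rightarrow> nat \<Rightarrow> 'a poly" where
  "gpoly_in_w a b n = (\<Sum>j<n. monom (damped_power (head_tail_fps b a) n $ j) j)"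

lemma poly_gpoly_in_w:
  "poly (gpoly_in_w a b n) w = (\<Sum>j<n. damped_power (head_tail_fps b a) n $ j * w ^ j)"
  by (simp add: gpoly_in_w_def poly_sum poly_monom)

lemma poly_gpoly_in_w_Suc:
  fixes a b w :: "'a::{idom,ring_char_0}"
  assumes "n \<ge> 1"
  shows "(w - 1) * poly (gpoly_in_w a b (Suc n)) w + (b + (a - b) * w) * poly (gpoly_in_w a b n) w
    = a * w ^ Suc n * poly (gpoly_in_w a b n) 1"
proof -
  let ?s = "damped_power (head_tail_fps b a) n"
  have "poly (gpoly_in_w a b n) v = (\<Sum>j\<le>n. ?s $ j * v ^ j)" for v
    by (simp add: poly_gpoly_in_w lessThan_Suc_atMost[symmetric] damped_power_nth_self[OF assms])
  moreover have "poly (gpoly_in_w a b (Suc n)) w = (\<Sum>j\<le>n. (head_tail_fps b a * ?s) $ j * w ^ j)"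
    by (simp add: poly_gpoly_in_w damped_power_Suc[OF assms] lessThan_Suc_atMost)
  ultimately show ?thesis
    using truncated_eval_head_tail_fps_mult[of w b a ?s n] by simp
qed

lemma div_smult_linear_eqI:
  fixes p g :: "'a::{field,ring_char_0} poly"
  assumes "c \<noteq> 0" and "\<And>x. poly p x = c * (x - a) * poly g x"
  shows "p div smult c [:-a, 1:] = g"
proof -
  have "p = smult c [:-a, 1:] * g"
    by (rule poly_eq_poly_eq_iff[THEN iffD1]) (simp add: assms(2) algebra_simps fun_eq_iff)
  moreover have "smult c [:-a, 1:] \<noteq> 0"
    using assms(1) by simp
  ultimately show ?thesis
    by (metis nonzero_mult_div_cancel_left)
qed

lemma gpoly_SucI:
  assumes "a \<noteq> b"
    and "\<And>x. (x - a) * (a - b) ^ n * poly g x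
      = a * (x - b) ^ Suc n * poly (gpoly a b n) a - x * (a - b) ^ Suc n * poly (gpoly a b n) x"
  shows "gpoly a b (Suc n) = g"
  unfolding gpoly.simps by (rule div_smult_linear_eqI) (use assms in \<open>simp_all add: algebra_simps\<close>)

lemma gpoly_eq_pcompose_gpoly_in_w:
  assumes "a \<noteq> b" and "n \<ge> 1"
  shows "gpoly a b n = pcompose (gpoly_in_w a b n) [:- b / (a - b), 1 / (a - b):]"
  using assms(2)
proof (induction n rule: nat_induct_at_least)
  case base
  show ?case
    unfolding One_nat_def
    by (rule gpoly_SucI)
      (simp_all add: assms gpoly_in_w_def damped_power_def head_tail_fps_def poly_pcompose
        poly_monom algebra_simps)
next
  case (Suc n)
  let ?d = "a - b"
  let ?P = "\<lambda>k. poly (gpoly_in_w a b k)"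
  have d: "?d \<noteq> 0"
    using assms(1) by simp
  show ?case
  proof (rule gpoly_SucI[OF assms(1)])
    fix x
    define w where "w = (x - b) / ?d"
    have xb: "x - b = ?d * w"
      using d by (simp add: w_def)
    then have x: "x = b + ?d * w" and xa: "x - a = ?d * (w - 1)"
      by algebra+
    have IH: "poly (gpoly a b n) y = ?P n ((y - b) / ?d)" for y
      by (simp add: Suc.IH poly_pcompose diff_divide_distrib)
    have Pa: "poly (gpoly a b n) a = ?P n 1" and Px: "poly (gpoly a b n) x = ?P n w"
      using d by (simp_all add: IH w_def)
    have "poly (pcompose (gpoly_in_w a b (Suc n)) [:- b / ?d, 1 / ?d:]) x = ?P (Suc n) w"
      by (simp add: poly_pcompose w_def diff_divide_distrib)
    then have "(x - a) * ?d ^ n * poly (pcompose (gpoly_in_w a b (Suc n)) [:- b / ?d, 1 / ?d:]) x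
        = ?d ^ Suc n * ((w - 1) * ?P (Suc n) w)"
      by (simp add: xa)
    also have "(w - 1) * ?P (Suc n) w = a * w ^ Suc n * ?P n 1 - (b + ?d * w) * ?P n w"
      using poly_gpoly_in_w_Suc[OF Suc.hyps, of w a b] by (simp add: eq_diff_eq)
    also have "?d ^ Suc n * (a * w ^ Suc n * ?P n 1 - (b + ?d * w) * ?P n w)
        = a * (x - b) ^ Suc n * poly (gpoly a b n) a - x * ?d ^ Suc n * poly (gpoly a b n) x"
      unfolding Pa Px xb power_mult_distrib x[symmetric] by (simp only: right_diff_distrib mult_ac)
    finally show "(x - a) * ?d ^ n * poly (pcompose (gpoly_in_w a b (Suc n)) [:- b / ?d, 1 / ?d:]) x
        = a * (x - b) ^ Suc n * poly (gpoly a b n) a - x * ?d ^ Suc n * poly (gpoly a b n) x" .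
  qed
qed

theorem mainTheorem5:
  fixes a b x :: complex and n :: nat
  assumes "a \<noteq> b" and "n \<ge> 1"
  defines "w \<equiv> (b - x) / (b - a)"
  shows "poly (gpoly a b n) x =
    (1 / of_nat n) * fps_nth
      (inverse ((1 - fps_X) ^ 2) *
       ((fps_const ((a - b) * w) * fps_X + fps_const b) * inverse (1 - fps_const w * fps_X)) ^ n)
      (n - 1)"
proof -
  have "w = (x - b) / (a - b)"
    unfolding w_def by (metis minus_diff_eq minus_divide_divide)
  then have "poly (gpoly a b n) x = poly (gpoly_in_w a b n) w"
    by (simp add: gpoly_eq_pcompose_gpoly_in_w[OF assms(1,2)] poly_pcompose diff_divide_distrib)
  also have "\<dots> = (1 / of_nat n)
      * (inverse ((1 - fps_X) ^ 2) * (head_tail_fps b a ^ n oo (fps_const w * fps_X))) $ (n - 1)"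
    unfolding poly_gpoly_in_w by (rule sum_damped_power_eq_fps_nth[OF assms(2)])
  also have "head_tail_fps b a ^ n oo (fps_const w * fps_X)
      = ((fps_const ((a - b) * w) * fps_X + fps_const b) * inverse (1 - fps_const w * fps_X)) ^ n"
    unfolding head_tail_fps_compose_linear[symmetric] by (simp add: fps_compose_power)
  finally show ?thesis .
qed

end
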